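(* Let $M$ be a multiway system and let $(f,g)$ be its growth rate, i.e. either $(f,g)=(1,1)$ if $M$ is finite or bounded, or $f,g:\mathbb{R}_{\geq 0}\to\mathbb{R}_{\geq 0}$ are a pair of tight bounds of the growth function $g_M$ if $M$ is unbounded. Then there exists a constant $c\in\mathbb{R}$ such that $f,g\in o(e^{cx})$.
   Context: A (string-based) multiway system is a triple $M=(R,s_{\text{init}},\Sigma)$ where $\Sigma$ is a finite alphabet, $R=\{r_1\to t_1,\dots,r_k\to t_k\}$ is a finite set of string replacement rules with $r_i,t_i\in\Sigma^*$, and $s_{\text{init}}\in\Sigma^*$. Its states graph is the directed graph whose vertices are the strings reachable from $s_{\text{init}}$, with an edge $u\to v$ whenever $v$ arises from $u$ by replacing one occurrence of some $r_i$ in $u$ by $t_i$. The growth function $g_M(n)$ ($n\in\mathbb{N}_+$) is the number of states whose shortest-path distance from $s_{\text{init}}$ in the states graph equals $n-1$ (so $g_M(1)=1$; each generation counts only newly appearing states). $M$ is finite if $g_M(n)=0$ for some $n$; bounded if it is not finite and $g_M$ is bounded; unbounded otherwise. For an unbounded system with growth function $a$, put $\overline{a}_n=\max\{a_k: k\le n\}$ and $\underline{a}_n=\max(\{a_k : k\le n,\ \forall l\ge k: a_l\ge a_k\}\cup\{1\})$. For $h:\mathbb{N}_+\to\mathbb{N}_+$ and infinite $S\subseteq\mathbb{N}_+$, the linear interpolation $L_S(h):\mathbb{R}_{\ge0}\to\mathbb{R}_{\ge0}$ is the polygonal chain starting at $(0,0)$ and passing through the points $(n,h(n))$, $n\in S$,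 in increasing order of $n$. Continuous $f,g:\mathbb{R}_{\ge0}\to\mathbb{R}_{\ge0}$ are tight bounds of $a$ if $f\in\Theta(L_{\mathbb{N}_+}(\overline{a}))$ and $g\in\Theta(L_{\mathbb{N}_+}(\underline{a}))$. Here $\mathcal{O},o,\Omega,\omega,\Theta$ are the usual asymptotic classes as $x\to\infty$. *)

theory Defs
  imports Complex_Main "HOL-Library.Landau_Symbols"
begin

definition mw_system :: "'a set \<Rightarrow> ('a list \<times> 'a list) set \<Rightarrow> 'a list \<Rightarrow> bool" where
  "mw_system Alph R s \<longleftrightarrow> finite Alph \<and> finite R \<and> set s \<subseteq> Alph \<and>
     (\<forall>(r, t) \<in> R. set r \<subseteq> Alph \<and> set t \<subseteq> Alph)"

definition mw_step :: "('a list \<times> 'a list) set \<Rightarrow> 'a list \<Rightarrow> 'a list \<Rightarrow> bool" where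
  "mw_step R u v \<longleftrightarrow> (\<exists>(r, t) \<in> R. \<exists>x y. u = x @ r @ y \<and> v = x @ t @ y)"

definition states_at_dist :: "('a list \<times> 'a list) set \<Rightarrow> 'a list \<Rightarrow> nat \<Rightarrow> 'a list set" where
  "states_at_dist R s n = {u. (mw_step R ^^ n) s u \<and> (\<forall>m<n. \<not> (mw_step R ^^ m) s u)}"

text \<open>Growth function g_M(n) for n \<ge> 1 (the value at 0 is irrelevant).\<close>
definition growth :: "('a list \<times> 'a list) set \<Rightarrow> 'a list \<Rightarrow> nat \<Rightarrow> nat" where
  "growth R s n = card (states_at_dist R s (n - 1))"

definition mw_finite :: "('a list \<times> 'a list) set \<Rightarrow> 'a list \<Rightarrow> bool" where
  "mw_finite R s \<longleftrightarrow> (\<exists>n\<ge>1. growth R s n = 0)"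

definition mw_bounded :: "('a list \<times> 'a list) set \<Rightarrow> 'a list \<Rightarrow> bool" where
  "mw_bounded R s \<longleftrightarrow> \<not> mw_finite R s \<and> (\<exists>B. \<forall>n\<ge>1. growth R s n \<le> B)"

definition mw_unbounded :: "('a list \<times> 'a list) set \<Rightarrow> 'a list \<Rightarrow> bool" where
  "mw_unbounded R s \<longleftrightarrow> \<not> mw_finite R s \<and> \<not> mw_bounded R s"

definition upper_env :: "(nat \<Rightarrow> nat) \<Rightarrow> nat \<Rightarrow> nat" where
  "upper_env a n = Max {a k | k. 1 \<le> k \<and> k \<le> n}"

definition lower_env :: "(nat \<Rightarrow> nat) \<Rightarrow> nat \<Rightarrow> nat" where
  "lower_env a n = Max ({a k | k. 1 \<le> k \<and> k \<le> n \<and> (\<forall>l\<ge>k. a l \<ge> a k)} \<union> {1})"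

text \<open>Linear interpolation L_{N_+}(h): polygonal chain through (0,0) and (n, h n), n \<ge> 1.
  Meaningful for x \<ge> 0.\<close>
definition lin_interp :: "(nat \<Rightarrow> nat) \<Rightarrow> real \<Rightarrow> real" where
  "lin_interp h x = (let n = nat \<lfloor>x\<rfloor>; h0 = (\<lambda>k. if k = 0 then 0 else real (h k))
                     in h0 n + (x - real n) * (h0 (Suc n) - h0 n))"

definition nonneg_cont :: "(real \<Rightarrow> real) \<Rightarrow> bool" where
  "nonneg_cont f \<longleftrightarrow> continuous_on {0..} f \<and> (\<forall>x\<ge>0. f x \<ge> 0)"

definition tight_bounds :: "(nat \<Rightarrow> nat) \<Rightarrow> (real \<Rightarrow> real) \<Rightarrow> (real \<Rightarrow> real) \<Rightarrow> bool" where
  "tight_bounds a f g \<longleftrightarrow> nonneg_cont f \<and> nonneg_cont g \<and>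
     f \<in> \<Theta>(lin_interp (upper_env a)) \<and> g \<in> \<Theta>(lin_interp (lower_env a))"

definition growth_rate :: "('a list \<times> 'a list) set \<Rightarrow> 'a list \<Rightarrow> (real \<Rightarrow> real) \<Rightarrow> (real \<Rightarrow> real) \<Rightarrow> bool" where
  "growth_rate R s f g \<longleftrightarrow>
     ((mw_finite R s \<or> mw_bounded R s) \<and> f = (\<lambda>_. 1) \<and> g = (\<lambda>_. 1)) \<or>
     (mw_unbounded R s \<and> tight_bounds (growth R s) f g)"

end

theory Submission
  imports Defs "HOL-Real_Asymp.Real_Asymp"
begin

text \<open>A rule application lengthens a word by at most L, the maximal length of a right-hand
  side, so every state at distance n - 1 from s is a word over Alph of length at most
  length s + n L. Hence g_M(n) \<le> C E^n, both envelopes obey the same bound, and their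
  linear interpolations are O(E powr x); so f, g \<in> o(exp (c x)) for every c > ln E.\<close>

lemma relpowp_mw_step_length_le:
  assumes sys: "mw_system Alph R s"
    and L: "\<forall>(r, t) \<in> R. length t \<le> L"
    and "(mw_step R ^^ m) s u"
  shows "set u \<subseteq> Alph \<and> length u \<le> length s + m * L"
  using assms(3)
proof (induction m arbitrary: u)
  case 0
  then show ?case using sys by (auto simp: mw_system_def)
next
  case (Suc m)
  from Suc.prems obtain w where w: "(mw_step R ^^ m) s w" and step: "mw_step R w u"
    by (auto elim: relpowp_Suc_E)
  from step obtain r t x y where rt: "(r, t) \<in> R" and "w = x @ r @ y" "u = x @ t @ y"
    unfolding mw_step_def by blast
  moreover have "set t \<subseteq> Alph" using sys rt by (auto simp: mw_system_def)
  moreover have "length t \<le> L" using L rt by auto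
  ultimately show ?case using Suc.IH[OF w] by auto
qed

lemma sum_powers_le_Suc_power: "(\<Sum>i\<le>N. (a::nat) ^ i) \<le> (a + 1) ^ N"
proof (induction N)
  case 0
  then show ?case by simp
next
  case (Suc N)
  have "(\<Sum>i\<le>Suc N. a ^ i) = 1 + a * (\<Sum>i\<le>N. a ^ i)"
    by (subst sum.atMost_Suc_shift) (simp add: sum_distrib_left)
  also have "\<dots> \<le> 1 + a * (a + 1) ^ N" using Suc by simp
  also have "\<dots> \<le> (a + 1) ^ Suc N"
    using one_le_power[of "a + 1" N] by (simp add: algebra_simps)
  finally show ?case .
qed

lemma growth_le_exponential:
  assumes sys: "mw_system Alph R s"
  shows "\<exists>C E::real. 1 \<le> C \<and> 1 \<le> E \<and> (\<forall>n. real (growth R s n) \<le> C * E ^ n)"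
proof -
  have finR: "finite R" and finA: "finite Alph" using sys by (auto simp: mw_system_def)
  define L where "L = Max (insert 0 ((length \<circ> snd) ` R))"
  have L: "\<forall>(r, t) \<in> R. length t \<le> L"
  proof clarify
    fix r t assume "(r, t) \<in> R"
    then show "length t \<le> L" unfolding L_def using finR by (intro Max_ge) force+
  qed
  define B :: nat where "B = card Alph + 1"
  have growth_le: "growth R s n \<le> B ^ length s * (B ^ L) ^ n" for n
  proof -
    let ?N = "length s + (n - 1) * L"
    have "states_at_dist R s (n - 1) \<subseteq> {xs. set xs \<subseteq> Alph \<and> length xs \<le> ?N}"
      using relpowp_mw_step_length_le[OF sys L] unfolding states_at_dist_def by blast
    then have "growth R s n \<le> card {xs. set xs \<subseteq> Alph \<and> length xs \<le> ?N}"
      unfolding growth_def by (intro card_mono finite_lists_length_le finA)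
    also have "\<dots> = (\<Sum>i\<le>?N. card Alph ^ i)" by (rule card_lists_length_le[OF finA])
    also have "\<dots> \<le> B ^ ?N" unfolding B_def by (rule sum_powers_le_Suc_power)
    also have "\<dots> \<le> B ^ (length s + n * L)" by (intro power_increasing) (auto simp: B_def)
    also have "\<dots> = B ^ length s * (B ^ L) ^ n" by (simp add: power_add power_mult mult.commute)
    finally show ?thesis .
  qed
  show ?thesis
  proof (intro exI conjI allI)
    fix n
    show "real (growth R s n) \<le> real (B ^ length s) * real (B ^ L) ^ n"
      using growth_le[of n] by (metis of_nat_le_iff of_nat_mult of_nat_power)
  qed (auto simp: B_def)
qed

lemma upper_env_le:
  assumes "mono b" and "\<And>k. 1 \<le> k \<Longrightarrow> real (a k) \<le> b k" and "1 \<le> n"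
  shows "real (upper_env a n) \<le> b n"
proof -
  have "upper_env a n \<in> {a k | k. 1 \<le> k \<and> k \<le> n}"
    unfolding upper_env_def using \<open>1 \<le> n\<close> by (intro Max_in) auto
  then obtain k where "1 \<le> k" "k \<le> n" "upper_env a n = a k" by blast
  then show ?thesis using assms(1,2) monoD order_trans by metis
qed

lemma lower_env_le_max_upper_env: "lower_env a n \<le> max 1 (upper_env a n)"
  unfolding lower_env_def
proof (rule Max.boundedI)
  fix m assume "m \<in> {a k | k. 1 \<le> k \<and> k \<le> n \<and> (\<forall>l\<ge>k. a k \<le> a l)} \<union> {1}"
  then consider "m = 1" | k where "1 \<le> k" "k \<le> n" "m = a k" by blast
  then show "m \<le> max 1 (upper_env a n)"
  proof cases
    case (2 k)
    then have "m \<le> upper_env a n" unfolding upper_env_def by (intro Max_ge) auto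
    then show ?thesis by simp
  qed simp
qed simp_all

lemma lin_interp_eq_convex_combination:
  fixes h :: "nat \<Rightarrow> nat"
  defines "h0 \<equiv> \<lambda>k. if k = 0 then 0 else real (h k)"
  shows "lin_interp h x =
    (1 - (x - nat \<lfloor>x\<rfloor>)) * h0 (nat \<lfloor>x\<rfloor>) + (x - nat \<lfloor>x\<rfloor>) * h0 (Suc (nat \<lfloor>x\<rfloor>))"
  unfolding lin_interp_def Let_def h0_def by (simp add: algebra_simps)

lemma lin_interp_bounds:
  assumes "0 \<le> x" and "mono b" and "0 \<le> b 0" and "\<And>k. 1 \<le> k \<Longrightarrow> real (h k) \<le> b k"
  shows "0 \<le> lin_interp h x" and "lin_interp h x \<le> b (Suc (nat \<lfloor>x\<rfloor>))"
proof -
  define n where "n = nat \<lfloor>x\<rfloor>"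
  define t where "t = x - real n"
  define h0 where "h0 = (\<lambda>k. if k = 0 then 0 else real (h k))"
  have t: "0 \<le> t" "t \<le> 1" using \<open>0 \<le> x\<close> unfolding t_def n_def by linarith+
  have h0_le: "h0 k \<le> b (Suc n)" if "k \<le> Suc n" for k
  proof (cases "k = 0")
    case True
    have "b 0 \<le> b (Suc n)" using \<open>mono b\<close> by (rule monoD) simp
    then show ?thesis using True \<open>0 \<le> b 0\<close> by (simp add: h0_def)
  next
    case False
    have "real (h k) \<le> b k" using False assms(4) by simp
    also have "b k \<le> b (Suc n)" using \<open>mono b\<close> that by (rule monoD)
    finally show ?thesis using False by (simp add: h0_def)
  qed
  have eq: "lin_interp h x = (1 - t) * h0 n + t * h0 (Suc n)"
    unfolding lin_interp_eq_convex_combination t_def n_def h0_def ..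
  have "0 \<le> (1 - t) * h0 n + t * h0 (Suc n)" using t by (simp add: h0_def)
  then show "0 \<le> lin_interp h x" using eq by simp
  have "(1 - t) * h0 n + t * h0 (Suc n) \<le> (1 - t) * b (Suc n) + t * b (Suc n)"
    using t h0_le by (intro add_mono mult_left_mono) auto
  then show "lin_interp h x \<le> b (Suc (nat \<lfloor>x\<rfloor>))" using eq by (simp add: n_def algebra_simps)
qed

lemma lin_interp_bigo_exp:
  assumes C: "0 \<le> C" and E: "1 \<le> E" and h: "\<And>k. 1 \<le> k \<Longrightarrow> real (h k) \<le> C * E ^ k"
  shows "lin_interp h \<in> O(\<lambda>x. exp (ln E * x))"
proof (rule bigoI[where c = "C * E"])
  have mono: "mono (\<lambda>k. C * E ^ k)"
    using C E by (intro monoI mult_left_mono power_increasing) auto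
  show "\<forall>\<^sub>F x in at_top. norm (lin_interp h x) \<le> C * E * norm (exp (ln E * x))"
    using eventually_ge_at_top[of "0::real"]
  proof eventually_elim
    case (elim x)
    have "E ^ nat \<lfloor>x\<rfloor> = E powr real (nat \<lfloor>x\<rfloor>)" using E by (simp add: powr_realpow)
    also have "\<dots> \<le> E powr x" using E elim by (intro powr_mono) auto
    finally have "E * E ^ nat \<lfloor>x\<rfloor> \<le> E * E powr x" using E by simp
    then have "C * E ^ Suc (nat \<lfloor>x\<rfloor>) \<le> C * E * E powr x"
      using mult_left_mono[OF _ C] by (simp add: mult.assoc)
    moreover have "0 \<le> lin_interp h x" "lin_interp h x \<le> C * E ^ Suc (nat \<lfloor>x\<rfloor>)"
      using lin_interp_bounds[OF elim mono _ h] C by simp_all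
    moreover have "exp (ln E * x) = E powr x" using E by (simp add: powr_def mult.commute)
    ultimately show ?case by simp
  qed
qed

lemma exp_smallo_exp:
  fixes a b :: real
  assumes "a < b"
  shows "(\<lambda>x. exp (a * x)) \<in> o(\<lambda>x. exp (b * x))"
proof (rule smalloI_tendsto)
  have "LIM x at_top. (a - b) * x :> at_bot"
    using assms by (intro filterlim_tendsto_neg_mult_at_bot[OF tendsto_const] filterlim_ident) simp
  then have "((\<lambda>x. exp ((a - b) * x)) \<longlongrightarrow> 0) at_top"
    by (rule filterlim_compose[OF exp_at_bot])
  moreover have "exp (a * x) / exp (b * x) = exp ((a - b) * x)" for x
    by (simp add: exp_diff left_diff_distrib)
  ultimately show "((\<lambda>x. exp (a * x) / exp (b * x)) \<longlongrightarrow> 0) at_top" by simp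
qed auto

lemma tight_bounds_smallo_exp:
  assumes tight: "tight_bounds a f g"
    and C: "1 \<le> C" and E: "1 \<le> E" and a: "\<And>n. real (a n) \<le> C * E ^ n"
  shows "f \<in> o(\<lambda>x. exp ((ln E + 1) * x)) \<and> g \<in> o(\<lambda>x. exp ((ln E + 1) * x))"
proof -
  have C0: "0 \<le> C" using C by simp
  have mono: "mono (\<lambda>n. C * E ^ n)"
    using C E by (intro monoI mult_left_mono power_increasing) auto
  have upper: "real (upper_env a n) \<le> C * E ^ n" if "1 \<le> n" for n
    using upper_env_le[OF mono a that] .
  have lower: "real (lower_env a n) \<le> C * E ^ n" if "1 \<le> n" for n
  proof -
    have "1 \<le> C * E ^ n" using C E one_le_power[OF E] by (metis mult_mono' mult_1 zero_le_one)
    then show ?thesis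
      using lower_env_le_max_upper_env[of a n] upper[OF that] by linarith
  qed
  have "f \<in> O(lin_interp (upper_env a))" "g \<in> O(lin_interp (lower_env a))"
    using tight unfolding tight_bounds_def by (auto intro: bigthetaD1)
  moreover have "lin_interp (upper_env a) \<in> O(\<lambda>x. exp (ln E * x))"
    "lin_interp (lower_env a) \<in> O(\<lambda>x. exp (ln E * x))"
    using lin_interp_bigo_exp[OF C0 E] upper lower by blast+
  moreover have "(\<lambda>x. exp (ln E * x)) \<in> o(\<lambda>x. exp ((ln E + 1) * x))"
    by (rule exp_smallo_exp) simp
  ultimately show ?thesis
    by (meson landau_o.big_small_trans landau_o.big_trans)
qed

theorem lemma1:
  fixes Alph :: "'a set" and R :: "('a list \<times> 'a list) set" and s :: "'a list"
    and f g :: "real \<Rightarrow> real"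
  assumes "mw_system Alph R s"
    and "growth_rate R s f g"
  shows "\<exists>c::real. f \<in> o(\<lambda>x. exp (c * x)) \<and> g \<in> o(\<lambda>x. exp (c * x))"
proof -
  from assms(2) consider "f = (\<lambda>_. 1)" "g = (\<lambda>_. 1)" | "tight_bounds (growth R s) f g"
    unfolding growth_rate_def by blast
  then show ?thesis
  proof cases
    case 1
    have "(\<lambda>_::real. 1::real) \<in> o(\<lambda>x. exp (1 * x))" by real_asymp
    then show ?thesis using 1 by blast
  next
    case 2
    obtain C E :: real where "1 \<le> C" "1 \<le> E" "\<And>n. real (growth R s n) \<le> C * E ^ n"
      using growth_le_exponential[OF assms(1)] by blast
    then show ?thesis using tight_bounds_smallo_exp[OF 2] by blast
  qed
qed

end
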